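(* The variety $\mathsf{V}(S_{(4,445)})$ is the ai-semiring variety defined by the identities $x^2y\approx xy$, $xyz\approx xzy$, $x^2\approx x^2+x$, $x_1+x_2x_3\approx x_1+x_2x_3+x_1x_2x_3x_4$.
   Context: An ai-semiring is an algebra $(S,+,\cdot)$ with $(S,+)$ a semilattice, $(S,\cdot)$ a semigroup, and both distributive laws. $\mathsf{V}(S)$ is the variety generated by $S$; "the ai-semiring variety defined by identities $\Sigma$" is the class of all ai-semirings satisfying $\Sigma$. $S_{(4,445)}$ has carrier $\{1,2,3,4\}$; addition: $x+x=x$, $2+x=x$, $1+x=1$ for all $x$, $3+4=1$; multiplication (row $a$, column $b$ gives $a\cdot b$): row $1$: $1,2,1,1$; row $2$: $2,2,2,2$; row $3$: $1,2,1,1$; row $4$: $4,2,4,4$. *)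

theory Defs
  imports Main
begin

definition ai_semiring :: "('a \<Rightarrow> 'a \<Rightarrow> 'a) \<Rightarrow> ('a \<Rightarrow> 'a \<Rightarrow> 'a) \<Rightarrow> bool" where
  "ai_semiring add mul \<longleftrightarrow>
     (\<forall>x y z. add (add x y) z = add x (add y z)) \<and>
     (\<forall>x y. add x y = add y x) \<and>
     (\<forall>x. add x x = x) \<and>
     (\<forall>x y z. mul (mul x y) z = mul x (mul y z)) \<and>
     (\<forall>x y z. mul x (add y z) = add (mul x y) (mul x z)) \<and>
     (\<forall>x y z. mul (add x y) z = add (mul x z) (mul y z))"

datatype trm = Var nat | Pl trm trm | Ti trm trm

fun eval :: "('a \<Rightarrow> 'a \<Rightarrow> 'a) \<Rightarrow> ('a \<Rightarrow> 'a \<Rightarrow> 'a) \<Rightarrow> (nat \<Rightarrow> 'a) \<Rightarrow> trm \<Rightarrow> 'a" where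
  "eval add mul v (Var n) = v n"
| "eval add mul v (Pl s t) = add (eval add mul v s) (eval add mul v t)"
| "eval add mul v (Ti s t) = mul (eval add mul v s) (eval add mul v t)"

definition satisfies :: "('a \<Rightarrow> 'a \<Rightarrow> 'a) \<Rightarrow> ('a \<Rightarrow> 'a \<Rightarrow> 'a) \<Rightarrow> trm \<Rightarrow> trm \<Rightarrow> bool" where
  "satisfies add mul s t \<longleftrightarrow> (\<forall>v. eval add mul v s = eval add mul v t)"

text \<open>Membership in the variety V(B) generated by an algebra B (Birkhoff:
  V(B) = HSP(B) is the class of all algebras satisfying every identity of B).\<close>
definition in_variety_gen ::
  "('b \<Rightarrow> 'b \<Rightarrow> 'b) \<Rightarrow> ('b \<Rightarrow> 'b \<Rightarrow> 'b) \<Rightarrow> ('a \<Rightarrow> 'a \<Rightarrow> 'a) \<Rightarrow> ('a \<Rightarrow> 'a \<Rightarrow> 'a) \<Rightarrow> bool" where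
  "in_variety_gen addB mulB add mul \<longleftrightarrow>
     (\<forall>s t. satisfies addB mulB s t \<longrightarrow> satisfies add mul s t)"

datatype s4 = E1 | E2 | E3 | E4

fun s4_add :: "s4 \<Rightarrow> s4 \<Rightarrow> s4" where
  "s4_add E1 _ = E1"
| "s4_add _ E1 = E1"
| "s4_add E2 y = y"
| "s4_add x E2 = x"
| "s4_add E3 E3 = E3"
| "s4_add E4 E4 = E4"
| "s4_add E3 E4 = E1"
| "s4_add E4 E3 = E1"

fun s4_mul :: "s4 \<Rightarrow> s4 \<Rightarrow> s4" where
  "s4_mul _ E2 = E2"
| "s4_mul E2 _ = E2"
| "s4_mul E4 _ = E4"
| "s4_mul E1 _ = E1"
| "s4_mul E3 _ = E1"

end

theory Submission
  imports Defs
begin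

text \<open>
  Every term is a finite sum of words, so an identity holds in an ai-semiring exactly when every
  word of either side lies below the other side. It therefore suffices to transfer inequalities
  w <= u_1 + ... + u_n from S_(4,445) to every ai-semiring M satisfying the four identities.
  In such an M the value of a word of length at least 2 depends only on its first letter and its
  content, and it decreases when the content grows; a letter lies below each of its powers; and
  x_1 x_2 x_3 x_4 <= x_1 + x_2 x_3. Valuations in S that send letters to 2 (absorbing), 3 or 4
  locate witnesses among the u_i: a power of a if w = a; otherwise some u_i beginning with the
  first letter a of w and with content inside that of w, and, should this u_i be the letter a
  itself, also some u_j of length at least 2 with content inside that of w, whence
  w <= a u_j w <= a + u_j.
\<close>

fun foldl1 :: "('a \<Rightarrow> 'a \<Rightarrow> 'a) \<Rightarrow> 'a list \<Rightarrow> 'a" where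
  "foldl1 f [] = undefined"
| "foldl1 f (x # xs) = foldl f x xs"

lemma foldl_assoc:
  assumes "\<And>x y z. f (f x y) z = f x (f y z)"
  shows "foldl f (f x y) zs = f x (foldl f y zs)"
  by (induction zs arbitrary: y) (simp_all add: assms)

lemma foldl1_append:
  assumes "\<And>x y z. f (f x y) z = f x (f y z)" and "xs \<noteq> []" and "ys \<noteq> []"
  shows "foldl1 f (xs @ ys) = f (foldl1 f xs) (foldl1 f ys)"
  using assms(2,3) by (cases xs; cases ys) (simp_all add: foldl_assoc[of f, OF assms(1)])

lemma foldl1_map_hom:
  assumes "\<And>x y. h (f x y) = f (h x) (h y)" and "xs \<noteq> []"
  shows "h (foldl1 f xs) = foldl1 f (map h xs)"
proof -
  have "h (foldl f x ys) = foldl f (h x) (map h ys)" for x ys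
    by (induction ys arbitrary: x) (simp_all add: assms(1))
  then show ?thesis
    using assms(2) by (cases xs) simp_all
qed

lemma foldl1_concat:
  assumes "\<And>x y z. f (f x y) z = f x (f y z)" and "xss \<noteq> []" and "[] \<notin> set xss"
  shows "foldl1 f (concat xss) = foldl1 f (map (foldl1 f) xss)"
  using assms(2,3)
proof (induction xss)
  case (Cons xs xss)
  show ?case
  proof (cases "xss = []")
    case False
    then have "concat xss \<noteq> []"
      using Cons.prems by (cases xss) auto
    then have "foldl1 f (concat (xs # xss)) = f (foldl1 f xs) (foldl1 f (concat xss))"
      using foldl1_append[of f, OF assms(1), of xs "concat xss"] Cons.prems by auto
    also have "\<dots> = foldl1 f ([foldl1 f xs] @ map (foldl1 f) xss)"
      using foldl1_append[of f, OF assms(1), of "[foldl1 f xs]" "map (foldl1 f) xss"] Cons False by simp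
    finally show ?thesis
      by simp
  qed simp
qed simp

lemma foldl1_closed:
  assumes "xs \<noteq> []" and "set xs \<subseteq> A" and "\<And>x y. x \<in> A \<Longrightarrow> y \<in> A \<Longrightarrow> f x y \<in> A"
  shows "foldl1 f xs \<in> A"
proof -
  have "x \<in> A \<Longrightarrow> set ys \<subseteq> A \<Longrightarrow> foldl f x ys \<in> A" for x ys
    by (induction ys arbitrary: x) (simp_all add: assms(3))
  then show ?thesis
    using assms(1,2) by (cases xs) simp_all
qed

fun words :: "trm \<Rightarrow> nat list list" where
  "words (Var n) = [[n]]"
| "words (Pl s t) = words s @ words t"
| "words (Ti s t) = concat (map (\<lambda>u. map (\<lambda>w. u @ w) (words t)) (words s))"

lemma words_nonempty: "words t \<noteq> []" "[] \<notin> set (words t)"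
  by (induction t) auto

definition eval_word :: "('a \<Rightarrow> 'a \<Rightarrow> 'a) \<Rightarrow> (nat \<Rightarrow> 'a) \<Rightarrow> nat list \<Rightarrow> 'a" where
  "eval_word mul v w = foldl1 mul (map v w)"

definition eval_words ::
  "('a \<Rightarrow> 'a \<Rightarrow> 'a) \<Rightarrow> ('a \<Rightarrow> 'a \<Rightarrow> 'a) \<Rightarrow> (nat \<Rightarrow> 'a) \<Rightarrow> nat list list \<Rightarrow> 'a" where
  "eval_words add mul v ws = foldl1 add (map (eval_word mul v) ws)"

lemma eval_word_Cons: "eval_word mul v (a # r) = foldl mul (v a) (map v r)"
  by (simp add: eval_word_def)

lemma eval_word_singleton [simp]: "eval_word mul v [a] = v a"
  by (simp add: eval_word_Cons)

lemma eval_words_singleton [simp]: "eval_words add mul v [w] = eval_word mul v w"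
  by (simp add: eval_words_def)

locale ai_semiring_algebra =
  fixes add mul :: "'a \<Rightarrow> 'a \<Rightarrow> 'a"
  assumes ai_semiring: "ai_semiring add mul"
begin

lemma add_assoc: "add (add x y) z = add x (add y z)"
  and add_commute: "add x y = add y x"
  and add_idem: "add x x = x"
  and mul_assoc: "mul (mul x y) z = mul x (mul y z)"
  and distrib_left: "mul x (add y z) = add (mul x y) (mul x z)"
  and distrib_right: "mul (add x y) z = add (mul x z) (mul y z)"
  using ai_semiring unfolding ai_semiring_def by blast+

definition le :: "'a \<Rightarrow> 'a \<Rightarrow> bool" (infix "\<preceq>" 50) where
  "x \<preceq> y \<longleftrightarrow> add x y = y"

lemma le_refl: "x \<preceq> x"
  by (simp add: le_def add_idem)

lemma le_trans [trans]: "x \<preceq> y \<Longrightarrow> y \<preceq> z \<Longrightarrow> x \<preceq> z"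
  unfolding le_def by (metis add_assoc)

lemma le_antisym: "x \<preceq> y \<Longrightarrow> y \<preceq> x \<Longrightarrow> x = y"
  unfolding le_def by (metis add_commute)

lemma add_le_iff: "add x y \<preceq> z \<longleftrightarrow> x \<preceq> z \<and> y \<preceq> z"
  unfolding le_def by (metis add_assoc add_commute add_idem)

lemma foldl1_add_le_iff:
  assumes "xs \<noteq> []"
  shows "foldl1 add xs \<preceq> z \<longleftrightarrow> (\<forall>x\<in>set xs. x \<preceq> z)"
proof -
  have "foldl add x ys \<preceq> z \<longleftrightarrow> x \<preceq> z \<and> (\<forall>y\<in>set ys. y \<preceq> z)" for x ys
    by (induction ys arbitrary: x) (auto simp: add_le_iff)
  then show ?thesis
    using assms by (cases xs) simp_all
qed

lemma eval_word_append:
  "u \<noteq> [] \<Longrightarrow> w \<noteq> [] \<Longrightarrow> eval_word mul v (u @ w) = mul (eval_word mul v u) (eval_word mul v w)"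
  unfolding eval_word_def by (simp add: foldl1_append[of mul] mul_assoc)

lemma eval_words_append:
  "us \<noteq> [] \<Longrightarrow> ws \<noteq> [] \<Longrightarrow>
   eval_words add mul v (us @ ws) = add (eval_words add mul v us) (eval_words add mul v ws)"
  unfolding eval_words_def by (simp add: foldl1_append[of add] add_assoc)

lemma eval_words_times:
  assumes "us \<noteq> []" "[] \<notin> set us" "ws \<noteq> []" "[] \<notin> set ws"
  shows "eval_words add mul v (concat (map (\<lambda>u. map (\<lambda>w. u @ w) ws) us))
       = mul (eval_words add mul v us) (eval_words add mul v ws)"
proof -
  let ?W = "eval_word mul v" and ?sum = "foldl1 add"
  have "?sum (map ?W (concat (map (\<lambda>u. map (\<lambda>w. u @ w) ws) us)))
      = ?sum (map (\<lambda>u. ?sum (map (\<lambda>w. ?W (u @ w)) ws)) us)"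
    using assms foldl1_concat[of add, OF add_assoc, of "map (\<lambda>u. map (\<lambda>w. ?W (u @ w)) ws) us"]
    by (auto simp: map_concat comp_def)
  also have "\<dots> = ?sum (map (\<lambda>u. ?sum (map (\<lambda>w. mul (?W u) (?W w)) ws)) us)"
  proof -
    have "?W (u @ w) = mul (?W u) (?W w)" if "u \<in> set us" "w \<in> set ws" for u w
      using assms that by (metis eval_word_append)
    then show ?thesis
      by (simp cong: map_cong)
  qed
  also have "\<dots> = ?sum (map (\<lambda>u. mul (?W u) (?sum (map ?W ws))) us)"
    using assms(3) by (simp add: foldl1_map_hom[of "mul _" add] distrib_left comp_def)
  also have "\<dots> = mul (?sum (map ?W us)) (?sum (map ?W ws))"
    using assms(1) by (simp add: foldl1_map_hom[of "\<lambda>x. mul x _" add] distrib_right comp_def)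
  finally show ?thesis
    unfolding eval_words_def .
qed

lemma eval_eq_eval_words: "eval add mul v t = eval_words add mul v (words t)"
  by (induction t) (simp_all add: eval_words_append eval_words_times words_nonempty)

definition satisfies_word_le :: "nat list \<Rightarrow> nat list list \<Rightarrow> bool" where
  "satisfies_word_le w us \<longleftrightarrow> (\<forall>v. eval_word mul v w \<preceq> eval_words add mul v us)"

lemma eval_words_le_iff:
  "ws \<noteq> [] \<Longrightarrow> eval_words add mul v ws \<preceq> z \<longleftrightarrow> (\<forall>w\<in>set ws. eval_word mul v w \<preceq> z)"
  unfolding eval_words_def by (simp add: foldl1_add_le_iff)

lemma le_eval_words: "w \<in> set ws \<Longrightarrow> eval_word mul v w \<preceq> eval_words add mul v ws"
  using eval_words_le_iff[of ws v "eval_words add mul v ws"] by (cases ws) (auto simp: le_refl)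

lemma satisfies_word_le_witness:
  assumes "satisfies_word_le w us" and "us \<noteq> []" and "[] \<notin> set us"
    and "\<And>y. eval_word mul v w \<preceq> y \<Longrightarrow> y \<notin> A"
    and "\<And>x y. x \<in> A \<Longrightarrow> y \<in> A \<Longrightarrow> add x y \<in> A"
  obtains u where "u \<in> set us" and "u \<noteq> []" and "eval_word mul v u \<notin> A"
proof -
  have "eval_words add mul v us \<notin> A"
    using assms(1,4) unfolding satisfies_word_le_def by blast
  then obtain u where "u \<in> set us" and "eval_word mul v u \<notin> A"
    using foldl1_closed[of "map (eval_word mul v) us" A add] assms(2,5)
    unfolding eval_words_def by auto
  with assms(3) show thesis
    using that by auto
qed

lemma satisfies_iff_words_le:
  "satisfies add mul s t \<longleftrightarrow>
     (\<forall>w\<in>set (words s). satisfies_word_le w (words t)) \<and>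
     (\<forall>w\<in>set (words t). satisfies_word_le w (words s))"
proof -
  have "eval add mul v s = eval add mul v t \<longleftrightarrow>
      eval add mul v s \<preceq> eval add mul v t \<and> eval add mul v t \<preceq> eval add mul v s" for v
    by (auto simp: le_refl intro: le_antisym)
  then show ?thesis
    unfolding satisfies_def satisfies_word_le_def
    by (auto simp: eval_eq_eval_words eval_words_le_iff words_nonempty)
qed

end

locale ai_semiring_445 = ai_semiring_algebra +
  assumes sq_mul: "mul (mul x x) y = mul x y"
    and mul_right_comm: "mul (mul x y) z = mul (mul x z) y"
    and sq_add: "mul x x = add (mul x x) x"
    and add_mul_absorb:
      "add x1 (mul x2 x3) = add (add x1 (mul x2 x3)) (mul (mul (mul x1 x2) x3) x4)"
begin

lemma le_mul_self: "x \<preceq> mul x x"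
  unfolding le_def by (metis sq_add add_commute)

lemma mul_mul_le: "mul (mul x y) z \<preceq> mul x y"
proof -
  have "mul (mul (mul (mul x y) x) y) z = mul (mul x y) z"
    by (metis mul_assoc sq_mul)
  then show ?thesis
    using add_mul_absorb[of "mul x y" x y z] unfolding le_def by (metis add_idem add_commute)
qed

lemma mul_right_idem: "mul (mul x y) y = mul x y"
proof (rule le_antisym)
  show "mul (mul x y) y \<preceq> mul x y"
    by (rule mul_mul_le)
  have "mul (mul x y) (mul x y) = mul (mul (mul x x) y) y"
    by (metis mul_assoc mul_right_comm)
  also have "\<dots> = mul (mul x y) y"
    by (simp add: sq_mul)
  finally show "mul x y \<preceq> mul (mul x y) y"
    using le_mul_self[of "mul x y"] by simp
qed

lemma comp_fun_idem_right_mul: "comp_fun_idem (\<lambda>y x. mul x y)"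
  by unfold_locales (simp_all add: fun_eq_iff mul_right_comm mul_right_idem)

lemma foldl_mul_eq_fold_set: "foldl mul x ys = Finite_Set.fold (\<lambda>y x. mul x y) x (set ys)"
proof -
  interpret right_mul: comp_fun_idem "\<lambda>y x. mul x y"
    by (rule comp_fun_idem_right_mul)
  show ?thesis
    by (simp add: foldl_conv_fold right_mul.fold_set_fold)
qed

lemma foldl_mul_eq_if_set_eq:
  assumes "ys \<noteq> []" and "zs \<noteq> []" and "insert x (set ys) = insert x (set zs)"
  shows "foldl mul x ys = foldl mul x zs"
proof -
  have head: "foldl mul x (x # xs) = foldl mul x xs" if "xs \<noteq> []" for xs
    using that by (cases xs) (simp_all add: sq_mul)
  have "foldl mul x ys = foldl mul x (x # ys)"
    using head assms(1) by simp
  also have "\<dots> = foldl mul x (x # zs)"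
    by (simp only: foldl_mul_eq_fold_set) (simp add: assms(3))
  also have "\<dots> = foldl mul x zs"
    using head assms(2) by simp
  finally show ?thesis .
qed

lemma foldl_mul_le: "foldl mul (mul x y) zs \<preceq> mul x y"
proof (induction zs arbitrary: x y)
  case (Cons z zs)
  have "foldl mul (mul (mul x y) z) zs \<preceq> mul (mul x y) z"
    by (rule Cons.IH)
  also have "\<dots> \<preceq> mul x y"
    by (rule mul_mul_le)
  finally show ?case
    by simp
qed (simp add: le_refl)

lemma eval_word_antimono:
  assumes "q \<noteq> []" and "r \<noteq> []" and "set r \<subseteq> insert a (set q)"
  shows "eval_word mul v (a # q) \<preceq> eval_word mul v (a # r)"
proof -
  obtain b r' where r: "r = b # r'"
    using assms(2) by (cases r) auto
  let ?p = "foldl mul (v a) (map v r')"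
  have "eval_word mul v (a # q) = foldl mul (v a) (map v (r' @ b # q))"
    unfolding eval_word_Cons by (rule foldl_mul_eq_if_set_eq) (use assms r in auto)
  also have "\<dots> = foldl mul (mul ?p (v b)) (map v q)"
    by simp
  also have "\<dots> \<preceq> mul ?p (v b)"
    by (rule foldl_mul_le)
  also have "\<dots> = foldl mul (v a) (map v (r' @ [b]))"
    by simp
  also have "\<dots> = eval_word mul v (a # r)"
    unfolding eval_word_Cons r by (rule foldl_mul_eq_if_set_eq) auto
  finally show ?thesis .
qed

lemma var_le_eval_word:
  assumes "u \<noteq> []" and "set u \<subseteq> {a}"
  shows "v a \<preceq> eval_word mul v u"
proof -
  obtain q where u: "u = a # q" and q: "set q \<subseteq> {a}"
    using assms by (cases u) auto
  show ?thesis
  proof (cases "q = []")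
    case True
    then show ?thesis
      using u by (simp add: eval_word_Cons le_refl)
  next
    case False
    then have "eval_word mul v u = foldl mul (v a) [v a]"
      unfolding u eval_word_Cons by (intro foldl_mul_eq_if_set_eq) (use q in auto)
    then show ?thesis
      by (simp add: le_mul_self)
  qed
qed

lemma eval_word_le_add:
  assumes "w \<noteq> []"
  shows "eval_word mul v (a # c # d # q @ w) \<preceq> add (v a) (eval_word mul v (c # d # q))"
proof -
  let ?p = "eval_word mul v (d # q)"
  have "eval_word mul v (c # d # q) = mul (v c) ?p"
    using eval_word_append[of "[c]" "d # q"] by simp
  moreover have "eval_word mul v (a # c # d # q @ w) = mul (mul (mul (v a) (v c)) ?p) (eval_word mul v w)"
    using eval_word_append[of "[a, c] @ d # q" w] eval_word_append[of "[a, c]" "d # q"]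
      eval_word_append[of "[a]" "[c]"] assms by simp
  ultimately show ?thesis
    using add_mul_absorb[of "v a" "v c" ?p "eval_word mul v w"] unfolding le_def
    by (metis add_commute)
qed

end

lemma s4_all: "(\<forall>x. P x) \<longleftrightarrow> P E1 \<and> P E2 \<and> P E3 \<and> P E4"
  by (metis s4.exhaust)

interpretation S: ai_semiring_445 s4_add s4_mul
  by (simp add: ai_semiring_445_def ai_semiring_445_axioms_def ai_semiring_algebra_def
      ai_semiring_def s4_all)

lemma s4_mul_eq_E2_iff: "s4_mul x y = E2 \<longleftrightarrow> x = E2 \<or> y = E2"
  by (cases x; cases y) simp_all

lemma s4_eval_word_eq_E2_iff:
  assumes "w \<noteq> []"
  shows "eval_word s4_mul v w = E2 \<longleftrightarrow> (\<exists>x\<in>set w. v x = E2)"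
proof -
  have "foldl s4_mul y (map v xs) = E2 \<longleftrightarrow> y = E2 \<or> (\<exists>x\<in>set xs. v x = E2)" for y xs
    by (induction xs arbitrary: y) (auto simp: s4_mul_eq_E2_iff)
  then show ?thesis
    using assms by (cases w) (simp_all add: eval_word_Cons)
qed

lemma s4_eval_word_long:
  assumes "\<forall>x\<in>set (a # b # r). v x \<noteq> E2"
  shows "eval_word s4_mul v (a # b # r) = (if v a = E4 then E4 else E1)"
proof -
  have "foldl s4_mul y ys = y" if "y \<in> {E1, E4}" and "E2 \<notin> set ys" for y ys
    using that
  proof (induction ys)
    case (Cons z ys)
    then have "s4_mul y z = y"
      by (cases y; cases z) auto
    with Cons show ?case
      by simp
  qed simp
  moreover have "s4_mul (v a) (v b) = (if v a = E4 then E4 else E1)"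
    using assms by (cases "v a"; cases "v b") auto
  moreover have "E2 \<notin> set (map v r)"
    using assms by auto
  ultimately show ?thesis
    using assms by (simp add: eval_word_Cons)
qed

lemma s4_le_E1_iff: "S.le E1 x \<longleftrightarrow> x = E1"
  by (auto simp: S.le_def)

lemma s4_witness_single:
  assumes "S.satisfies_word_le [a] us" and "us \<noteq> []" and "[] \<notin> set us"
  obtains u where "u \<in> set us" and "u \<noteq> []" and "set u \<subseteq> {a}"
proof -
  define v where "v x = (if x = a then E3 else E2)" for x
  obtain u where u: "u \<in> set us" "u \<noteq> []" "eval_word s4_mul v u \<notin> {E2}"
    by (rule S.satisfies_word_le_witness[OF assms, of v "{E2}"]) (auto simp: v_def S.le_def)
  then have "set u \<subseteq> {a}"
    using s4_eval_word_eq_E2_iff[of u v] by (auto simp: v_def split: if_splits)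
  with u show thesis
    using that by blast
qed

lemma s4_witness_head:
  assumes "S.satisfies_word_le (a # b # r) us" and "us \<noteq> []" and "[] \<notin> set us"
  obtains q where "a # q \<in> set us" and "set q \<subseteq> set (a # b # r)"
proof -
  let ?w = "a # b # r"
  define v where "v x = (if x = a then E3 else if x \<in> set ?w then E4 else E2)" for x
  have w_E1: "eval_word s4_mul v ?w = E1"
    using s4_eval_word_long[of a b r v] by (simp add: v_def)
  obtain u where u: "u \<in> set us" "u \<noteq> []" "eval_word s4_mul v u \<notin> {E2, E4}"
    by (rule S.satisfies_word_le_witness[OF assms, of v "{E2, E4}"]) (use w_E1 in \<open>auto simp: s4_le_E1_iff\<close>)
  then obtain c q where cq: "u = c # q"
    by (meson neq_Nil_conv)
  have no_E2: "\<forall>x\<in>set u. v x \<noteq> E2"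
    using u s4_eval_word_eq_E2_iff[of u v] by auto
  then have "set u \<subseteq> set ?w"
    by (auto simp: v_def split: if_splits)
  moreover have "v c \<noteq> E4"
  proof (cases q)
    case Nil
    then show ?thesis
      using u cq by simp
  next
    case (Cons d q')
    then show ?thesis
      using u cq no_E2 s4_eval_word_long[of c d q' v] by auto
  qed
  then have "c = a"
    using no_E2 cq by (auto simp: v_def split: if_splits)
  ultimately show thesis
    using that u cq by auto
qed

lemma s4_witness_long:
  assumes "S.satisfies_word_le (a # b # r) us" and "us \<noteq> []" and "[] \<notin> set us"
  obtains c d q where "c # d # q \<in> set us" and "set (c # d # q) \<subseteq> set (a # b # r)"
proof -
  let ?w = "a # b # r"
  define v where "v x = (if x \<in> set ?w then E3 else E2)" for x
  have w_E1: "eval_word s4_mul v ?w = E1"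
    using s4_eval_word_long[of a b r v] by (simp add: v_def)
  obtain u where u: "u \<in> set us" "u \<noteq> []" "eval_word s4_mul v u \<notin> {E2, E3}"
    by (rule S.satisfies_word_le_witness[OF assms, of v "{E2, E3}"]) (use w_E1 in \<open>auto simp: s4_le_E1_iff\<close>)
  then have sub: "set u \<subseteq> set ?w"
    using s4_eval_word_eq_E2_iff[of u v] by (auto simp: v_def split: if_splits)
  have "u \<noteq> [c]" for c
    using u by (auto simp: v_def split: if_splits)
  then obtain c d q where "u = c # d # q"
    using u by (metis neq_Nil_conv)
  with u sub show thesis
    using that by blast
qed

context ai_semiring_445
begin

lemma var_le_eval_words_if_s4:
  assumes "S.satisfies_word_le [a] us" and "us \<noteq> []" and "[] \<notin> set us"
  shows "v a \<preceq> eval_words add mul v us"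
proof -
  obtain u where u: "u \<in> set us" "u \<noteq> []" "set u \<subseteq> {a}"
    using s4_witness_single[OF assms] by blast
  have "v a \<preceq> eval_word mul v u"
    using u by (intro var_le_eval_word)
  also have "\<dots> \<preceq> eval_words add mul v us"
    using u by (intro le_eval_words)
  finally show ?thesis .
qed

lemma eval_word_le_eval_words_if_s4:
  assumes "S.satisfies_word_le w us" and "us \<noteq> []" and "[] \<notin> set us"
    and w: "w = a # b # r"
  shows "eval_word mul v w \<preceq> eval_words add mul v us"
proof -
  obtain q where q: "a # q \<in> set us" "set q \<subseteq> set w"
    using s4_witness_head[OF assms(1-3)[unfolded w]] w by blast
  show ?thesis
  proof (cases "q = []")
    case False
    have "eval_word mul v w \<preceq> eval_word mul v (a # q)"
      unfolding w using q False w by (intro eval_word_antimono) auto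
    also have "\<dots> \<preceq> eval_words add mul v us"
      using q by (intro le_eval_words)
    finally show ?thesis .
  next
    case True
    obtain c d p where t: "c # d # p \<in> set us" "set (c # d # p) \<subseteq> set w"
      using s4_witness_long[OF assms(1-3)[unfolded w]] w by blast
    have "eval_word mul v w \<preceq> eval_word mul v (a # c # d # p @ w)"
      unfolding w using t w by (intro eval_word_antimono) auto
    also have "\<dots> \<preceq> add (v a) (eval_word mul v (c # d # p))"
      using w by (intro eval_word_le_add) simp
    also have "\<dots> \<preceq> eval_words add mul v us"
      using le_eval_words[OF q(1)] le_eval_words[OF t(1)] True by (simp add: add_le_iff)
    finally show ?thesis .
  qed
qed

lemma satisfies_word_le_if_s4:
  assumes "S.satisfies_word_le w us" and "w \<noteq> []" and "us \<noteq> []" and "[] \<notin> set us"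
  shows "satisfies_word_le w us"
  unfolding satisfies_word_le_def
proof
  fix v
  obtain a r where w: "w = a # r"
    using assms(2) by (cases w) auto
  show "eval_word mul v w \<preceq> eval_words add mul v us"
  proof (cases r)
    case Nil
    then show ?thesis
      using var_le_eval_words_if_s4 assms(1,3,4) w by simp
  next
    case (Cons b r')
    then show ?thesis
      using eval_word_le_eval_words_if_s4 assms(1,3,4) w by simp
  qed
qed

lemma in_variety_gen_s4: "in_variety_gen s4_add s4_mul add mul"
  unfolding in_variety_gen_def S.satisfies_iff_words_le satisfies_iff_words_le
  by (fastforce intro: satisfies_word_le_if_s4 simp: words_nonempty)

end

lemma eval_eq_if_in_variety_gen:
  assumes "in_variety_gen addB mulB add mul" and "satisfies addB mulB s t"
  shows "eval add mul v s = eval add mul v t"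
  using assms unfolding in_variety_gen_def satisfies_def by blast

lemma ai_semiring_if_in_variety_gen:
  assumes "ai_semiring addB mulB" and V: "in_variety_gen addB mulB add mul"
  shows "ai_semiring add mul"
proof -
  interpret B: ai_semiring_algebra addB mulB
    by (rule ai_semiring_algebra.intro) (fact assms(1))
  let ?x = "Var 0" and ?y = "Var 1" and ?z = "Var 2"
  have holds: "eval add mul ((!) [x, y, z]) s = eval add mul ((!) [x, y, z]) t"
    if "satisfies addB mulB s t" for s t x y z
    using eval_eq_if_in_variety_gen[OF V that] .
  show ?thesis
    unfolding ai_semiring_def
  proof (intro conjI allI)
    fix x y z
    show "add (add x y) z = add x (add y z)"
      using holds[of "Pl (Pl ?x ?y) ?z" "Pl ?x (Pl ?y ?z)" x y z]
      by (simp add: satisfies_def B.add_assoc)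
    show "add x y = add y x"
      using holds[of "Pl ?x ?y" "Pl ?y ?x" x y] by (simp add: satisfies_def B.add_commute)
    show "add x x = x"
      using holds[of "Pl ?x ?x" ?x x] by (simp add: satisfies_def B.add_idem)
    show "mul (mul x y) z = mul x (mul y z)"
      using holds[of "Ti (Ti ?x ?y) ?z" "Ti ?x (Ti ?y ?z)" x y z]
      by (simp add: satisfies_def B.mul_assoc)
    show "mul x (add y z) = add (mul x y) (mul x z)"
      using holds[of "Ti ?x (Pl ?y ?z)" "Pl (Ti ?x ?y) (Ti ?x ?z)" x y z]
      by (simp add: satisfies_def B.distrib_left)
    show "mul (add x y) z = add (mul x z) (mul y z)"
      using holds[of "Ti (Pl ?x ?y) ?z" "Pl (Ti ?x ?z) (Ti ?y ?z)" x y z]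
      by (simp add: satisfies_def B.distrib_right)
  qed
qed

lemma ai_semiring_445_if_in_variety_gen_s4:
  assumes V: "in_variety_gen s4_add s4_mul add mul"
  shows "ai_semiring_445 add mul"
proof -
  let ?x = "Var 0" and ?y = "Var 1" and ?z = "Var 2" and ?u = "Var 3"
  have holds: "eval add mul ((!) [x, y, z, u]) s = eval add mul ((!) [x, y, z, u]) t"
    if "satisfies s4_add s4_mul s t" for s t x y z u
    using eval_eq_if_in_variety_gen[OF V that] .
  show ?thesis
    unfolding ai_semiring_445_def ai_semiring_445_axioms_def ai_semiring_algebra_def
    using ai_semiring_if_in_variety_gen[OF S.ai_semiring V]
      holds[of "Ti (Ti ?x ?x) ?y" "Ti ?x ?y"] holds[of "Ti (Ti ?x ?y) ?z" "Ti (Ti ?x ?z) ?y"]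
      holds[of "Ti ?x ?x" "Pl (Ti ?x ?x) ?x"]
      holds[of "Pl ?x (Ti ?y ?z)" "Pl (Pl ?x (Ti ?y ?z)) (Ti (Ti (Ti ?x ?y) ?z) ?u)"]
    by (simp add: satisfies_def S.sq_mul S.mul_right_comm flip: S.sq_add S.add_mul_absorb)
qed

theorem proposition7p5:
  fixes add mul :: "'a \<Rightarrow> 'a \<Rightarrow> 'a"
  shows "in_variety_gen s4_add s4_mul add mul \<longleftrightarrow>
           ai_semiring add mul \<and>
           (\<forall>x y. mul (mul x x) y = mul x y) \<and>
           (\<forall>x y z. mul (mul x y) z = mul (mul x z) y) \<and>
           (\<forall>x. mul x x = add (mul x x) x) \<and>
           (\<forall>x1 x2 x3 x4. add x1 (mul x2 x3) =
                add (add x1 (mul x2 x3)) (mul (mul (mul x1 x2) x3) x4))"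
proof -
  have "in_variety_gen s4_add s4_mul add mul \<longleftrightarrow> ai_semiring_445 add mul"
    using ai_semiring_445.in_variety_gen_s4 ai_semiring_445_if_in_variety_gen_s4 by blast
  then show ?thesis
    by (simp add: ai_semiring_445_def ai_semiring_445_axioms_def ai_semiring_algebra_def)
qed

end
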